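(* Let $n\ge1$, let $f$ be a rational function in $z_1,\dots,z_n$, and let $T\subseteq\mathbb C^n$ be a connected multicircular domain on which $f$ is holomorphic and such that the highest power of $z_n$ occurring in the Laurent series expansion of $f$ on $T$ equals minus the order of the pole $z_n=\infty$ of $f$. Let $S$ be a nonempty open subset of $T$ and $S'$ its image under $(z_1,\dots,z_n)\mapsto(z_1,\dots,z_{n-1})$. Let $a_{k_1\dots k_n}\in\mathbb C$ be such that for each fixed $k_n\in\mathbb Z$ the series $\sum_{k_1,\dots,k_{n-1}\in\mathbb Z}a_{k_1\dots k_n}z_1^{k_1}\cdots z_{n-1}^{k_{n-1}}$ converges absolutely for every $(z_1,\dots,z_{n-1})\in S'$, and the series $\sum_{k_n\in\mathbb Z}\big(\sum_{k_1,\dots,k_{n-1}}a_{k_1\dots k_n}z_1^{k_1}\cdots z_{n-1}^{k_{n-1}}\big)z_n^{k_n}$, regarded as a series whose terms are the bracketed sums times $z_n^{k_n}$, is upper-truncated in $z_n$ and converges to $f(z_1,\dots,z_n)$ for every point of $S$. Then the Laurent series $\sum_{k_1,\dots,k_n\in\mathbb Z}a_{k_1\dots k_n}z_1^{k_1}\cdots z_n^{k_n}$ converges absolutely to $f(z_1,\dots,z_n)$ for every $(z_1,\dots,z_n)\in T$.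
   Context: A multicircular domain (centered at the origin) is an open subset $T\subseteq\mathbb C^n$ such that $(z_1,\dots,z_n)\in T$ implies $(z_1e^{i\theta_1},\dots,z_ne^{i\theta_n})\in T$ for all $\theta_1,\dots,\theta_n\in\mathbb R$. A holomorphic function on a connected multicircular domain has a unique Laurent series expansion centered at $0$ converging absolutely to it on the domain. *)

theory Defs
  imports "HOL-Analysis.Analysis"
begin

text \<open>Points of C^n are modelled as functions nat => complex vanishing at all indices >= n;
  coordinate z_j of the paper is z (j-1). Open subsets of C^n are open subsets of this subspace
  (product topology, which restricts to the Euclidean topology on C^n).\<close>

definition cspace :: "nat \<Rightarrow> (nat \<Rightarrow> complex) set" where
  "cspace n = {z. \<forall>i\<ge>n. z i = 0}"

definition open_in_C :: "nat \<Rightarrow> (nat \<Rightarrow> complex) set \<Rightarrow> bool" where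
  "open_in_C n U \<longleftrightarrow> openin (top_of_set (cspace n)) U"

definition multicircular_domain :: "nat \<Rightarrow> (nat \<Rightarrow> complex) set \<Rightarrow> bool" where
  "multicircular_domain n T \<longleftrightarrow> open_in_C n T \<and>
     (\<forall>z\<in>T. \<forall>\<theta>::nat \<Rightarrow> real. (\<lambda>i. z i * cis (\<theta> i)) \<in> T)"

text \<open>Holomorphic in several variables: continuous and holomorphic in each variable separately
  (equivalent to the usual notion by Osgood's lemma).\<close>
definition holo_on_C :: "nat \<Rightarrow> ((nat \<Rightarrow> complex) \<Rightarrow> complex) \<Rightarrow> (nat \<Rightarrow> complex) set \<Rightarrow> bool" where
  "holo_on_C n f T \<longleftrightarrow> T \<subseteq> cspace n \<and> continuous_on T f \<and>
     (\<forall>z\<in>T. \<forall>i<n. \<exists>e>0. (\<forall>w. cmod (w - z i) < e \<longrightarrow> z(i := w) \<in> T) \<and>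
        (\<lambda>w. f (z(i := w))) field_differentiable at (z i))"

definition is_mpoly :: "nat \<Rightarrow> ((nat \<Rightarrow> nat) \<Rightarrow> complex) \<Rightarrow> bool" where
  "is_mpoly n c \<longleftrightarrow> finite {\<alpha>. c \<alpha> \<noteq> 0} \<and> (\<forall>\<alpha>. c \<alpha> \<noteq> 0 \<longrightarrow> (\<forall>i\<ge>n. \<alpha> i = 0))"

definition mpoly_eval :: "nat \<Rightarrow> ((nat \<Rightarrow> nat) \<Rightarrow> complex) \<Rightarrow> (nat \<Rightarrow> complex) \<Rightarrow> complex" where
  "mpoly_eval n c z = (\<Sum>\<alpha>\<in>{\<alpha>. c \<alpha> \<noteq> 0}. c \<alpha> * (\<Prod>i<n. z i ^ \<alpha> i))"

definition deg_last :: "nat \<Rightarrow> ((nat \<Rightarrow> nat) \<Rightarrow> complex) \<Rightarrow> nat" where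
  "deg_last n c = Max ((\<lambda>\<alpha>. \<alpha> (n - 1)) ` {\<alpha>. c \<alpha> \<noteq> 0})"

definition lexps :: "nat \<Rightarrow> (nat \<Rightarrow> int) set" where
  "lexps n = {k. \<forall>i\<ge>n. k i = 0}"

definition lmono :: "nat \<Rightarrow> (nat \<Rightarrow> complex) \<Rightarrow> (nat \<Rightarrow> int) \<Rightarrow> complex" where
  "lmono n z k = (\<Prod>i<n. z i powi k i)"

definition laurent_abs_conv_to ::
  "nat \<Rightarrow> ((nat \<Rightarrow> int) \<Rightarrow> complex) \<Rightarrow> (nat \<Rightarrow> complex) \<Rightarrow> complex \<Rightarrow> bool" where
  "laurent_abs_conv_to n a z v \<longleftrightarrow>
     (\<lambda>k. norm (a k * lmono n z k)) summable_on lexps n \<and>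
     ((\<lambda>k. a k * lmono n z k) has_sum v) (lexps n)"

definition laurent_abs_conv ::
  "nat \<Rightarrow> ((nat \<Rightarrow> int) \<Rightarrow> complex) \<Rightarrow> (nat \<Rightarrow> complex) \<Rightarrow> bool" where
  "laurent_abs_conv n a z \<longleftrightarrow> (\<lambda>k. norm (a k * lmono n z k)) summable_on lexps n"

definition laurent_expansion_on ::
  "nat \<Rightarrow> ((nat \<Rightarrow> int) \<Rightarrow> complex) \<Rightarrow> ((nat \<Rightarrow> complex) \<Rightarrow> complex) \<Rightarrow> (nat \<Rightarrow> complex) set \<Rightarrow> bool" where
  "laurent_expansion_on n b f T \<longleftrightarrow> (\<forall>z\<in>T. laurent_abs_conv_to n b z (f z))"

definition proj_last :: "nat \<Rightarrow> (nat \<Rightarrow> complex) \<Rightarrow> (nat \<Rightarrow> complex)" where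
  "proj_last n z = z(n - 1 := 0)"

definition inner_sum :: "nat \<Rightarrow> ((nat \<Rightarrow> int) \<Rightarrow> complex) \<Rightarrow> int \<Rightarrow> (nat \<Rightarrow> complex) \<Rightarrow> complex" where
  "inner_sum n a m w = (\<Sum>\<^sub>\<infinity>k'\<in>lexps (n - 1). a (k'(n - 1 := m)) * lmono (n - 1) w k')"

end

theory Submission
  imports Defs "HOL-Complex_Analysis.Complex_Analysis"
begin

text \<open>
  The coefficients a must be those of the Laurent expansion b of f on T, which then converges
  to f on all of T. Fix a base point \<rho> under S and regard both expansions as series in the last
  variable t. By upper truncation, the a-series converges absolutely wherever |t| exceeds the
  modulus of some point of the slice of S over \<rho>, and there it agrees with the b-series.
  A Laurent series in one variable that vanishes on a nonempty open set has zero coefficients: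
  on an annulus its regular part and its principal part glue to an entire function that tends
  to 0 at infinity, so Liouville's theorem applies. Hence the inner sums of a and b agree on
  an open set of base points, and uniqueness of Laurent coefficients in the remaining
  variables, proved by induction on their number from the same one-variable fact, gives a = b.
\<close>

section \<open>Laurent series in one variable\<close>

definition regular_part :: "(int \<Rightarrow> complex) \<Rightarrow> complex fps" where
  "regular_part e = Abs_fps (\<lambda>j. e (int j))"

definition principal_part :: "(int \<Rightarrow> complex) \<Rightarrow> complex fps" where
  "principal_part e = Abs_fps (\<lambda>j. if j = 0 then 0 else e (- int j))"

lemma laurent_coeff_eq_0_if_parts_eq_0:
  assumes "regular_part e = 0" "principal_part e = 0"
  shows "e k = 0"
proof (cases "k \<ge> 0")
  case True
  then show ?thesis
    using arg_cong[OF assms(1), of "\<lambda>p. fps_nth p (nat k)"] by (simp add: regular_part_def)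
next
  case False
  then show ?thesis
    using arg_cong[OF assms(2), of "\<lambda>p. fps_nth p (nat (- k))"] by (simp add: principal_part_def)
qed

lemma conv_radius_regular_part_ge:
  assumes "r > 0" "(\<lambda>k. norm (e k) * r powi k) summable_on UNIV"
  shows "fps_conv_radius (regular_part e) \<ge> r"
proof -
  have "(\<lambda>k. norm (e k) * r powi k) summable_on range int"
    using assms(2) by (rule summable_on_subset) auto
  then have "summable (\<lambda>j. norm (e (int j)) * r ^ j)"
    using assms(1) by (subst (asm) summable_on_reindex) (auto simp: o_def summable_on_UNIV_nonneg_real_iff)
  moreover have "norm (fps_nth (regular_part e) j * of_real r ^ j) = norm (e (int j)) * r ^ j" for j
    using assms(1) by (simp add: regular_part_def norm_mult norm_power)
  ultimately have "summable (\<lambda>j. norm (fps_nth (regular_part e) j * of_real r ^ j))"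
    by simp
  from conv_radius_geI[OF summable_norm_cancel[OF this]] show ?thesis
    using assms(1) by (simp add: fps_conv_radius_def)
qed

lemma conv_radius_principal_part_ge:
  assumes "r > 0" "(\<lambda>k. norm (e k) * r powi k) summable_on UNIV"
  shows "fps_conv_radius (principal_part e) \<ge> inverse r"
proof -
  have "(\<lambda>k. norm (e k) * r powi k) summable_on range (\<lambda>j. - int j)"
    using assms(2) by (rule summable_on_subset) auto
  then have "summable (\<lambda>j. norm (e (- int j)) * inverse r ^ j)"
    using assms(1) by (subst (asm) summable_on_reindex)
      (auto simp: inj_on_def o_def summable_on_UNIV_nonneg_real_iff power_int_minus power_inverse)
  then have "summable (\<lambda>j. norm (fps_nth (principal_part e) j * of_real (inverse r) ^ j))"
    by (rule summable_comparison_test'[where N = 0])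
      (use assms(1) in \<open>simp add: principal_part_def norm_mult norm_power norm_inverse\<close>)
  from conv_radius_geI[OF summable_norm_cancel[OF this]] show ?thesis
    using assms(1) by (simp add: fps_conv_radius_def norm_inverse)
qed

lemma ereal_less_le_trans: "a < b \<Longrightarrow> ereal b \<le> c \<Longrightarrow> ereal a < c"
  using less_le_trans[of "ereal a" "ereal b" c] by simp

lemma holomorphic_on_eval_fps_inverse:
  fixes q :: "complex fps" and \<rho> :: real
  assumes "\<rho> > 0" "fps_conv_radius q \<ge> inverse \<rho>"
  shows "(\<lambda>t. eval_fps q (inverse t)) holomorphic_on {t::complex. \<rho> < norm t}"
proof -
  have "inverse t \<in> eball 0 (fps_conv_radius q)" if "\<rho> < norm t" for t :: complex
  proof -
    have "norm (inverse t) < inverse \<rho>"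
      using assms(1) that by (simp add: norm_inverse less_imp_inverse_less)
    then show ?thesis
      using assms(2) by (simp add: ereal_less_le_trans)
  qed
  then have "inverse ` {t::complex. \<rho> < norm t} \<subseteq> eball 0 (fps_conv_radius q)"
    by auto
  then have "eval_fps q holomorphic_on inverse ` {t::complex. \<rho> < norm t}"
    by (rule holomorphic_on_eval_fps)
  moreover have "inverse holomorphic_on {t::complex. \<rho> < norm t}"
    using assms(1) by (auto intro!: holomorphic_intros)
  ultimately show ?thesis
    using holomorphic_on_compose by (auto simp: o_def)
qed

definition laurent_sum :: "(int \<Rightarrow> complex) \<Rightarrow> complex \<Rightarrow> complex" where
  "laurent_sum e t = eval_fps (regular_part e) t + eval_fps (principal_part e) (inverse t)"

lemma laurent_has_sum_laurent_sum:
  fixes e :: "int \<Rightarrow> complex" and \<rho> R :: real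
  assumes t: "0 < \<rho>" "\<rho> < norm t" "norm t < R"
    and rad_p: "fps_conv_radius (regular_part e) \<ge> R"
    and rad_q: "fps_conv_radius (principal_part e) \<ge> inverse \<rho>"
  shows "((\<lambda>k. e k * t powi k) has_sum laurent_sum e t) UNIV"
proof -
  have reg: "norm t < fps_conv_radius (regular_part e)"
    using ereal_less_le_trans[OF t(3) rad_p] .
  have "norm (inverse t) < inverse \<rho>"
    using t by (simp add: norm_inverse less_imp_inverse_less)
  then have prin: "norm (inverse t) < fps_conv_radius (principal_part e)"
    using ereal_less_le_trans[OF _ rad_q] by simp
  have "((\<lambda>j. e (int j) * t ^ j) has_sum eval_fps (regular_part e) t) UNIV"
    using norm_summable_fps[OF reg] summable_fps[OF reg] unfolding eval_fps_def
    by (intro norm_summable_imp_has_sum) (auto simp: regular_part_def intro: summable_sums)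
  then have nonneg: "((\<lambda>k. e k * t powi k) has_sum eval_fps (regular_part e) t) {k. k \<ge> 0}"
    by (subst has_sum_reindex_bij_witness[where i = int and j = nat and T = UNIV])
      (auto simp: power_int_def)
  have "((\<lambda>j. fps_nth (principal_part e) j * inverse t ^ j)
          has_sum eval_fps (principal_part e) (inverse t)) UNIV"
    using norm_summable_fps[OF prin] summable_fps[OF prin] unfolding eval_fps_def
    by (intro norm_summable_imp_has_sum) (auto intro: summable_sums)
  then have "((\<lambda>j. fps_nth (principal_part e) j * inverse t ^ j)
          has_sum eval_fps (principal_part e) (inverse t)) {j. j > 0}"
    by (subst has_sum_cong_neutral[where T = UNIV]) (auto simp: principal_part_def)
  then have neg: "((\<lambda>k. e k * t powi k) has_sum eval_fps (principal_part e) (inverse t)) {k. k < 0}"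
    by (subst has_sum_reindex_bij_witness[where i = "\<lambda>j. - int j" and j = "\<lambda>k. nat (- k)" and T = "{j. j > 0}"])
      (auto simp: principal_part_def power_int_def power_inverse)
  have "((\<lambda>k. e k * t powi k) has_sum
          eval_fps (regular_part e) t + eval_fps (principal_part e) (inverse t)) ({k. k \<ge> 0} \<union> {k. k < 0})"
    by (rule has_sum_Un_disjoint[OF nonneg neg]) auto
  moreover have "{k::int. k \<ge> 0} \<union> {k. k < 0} = UNIV"
    by auto
  ultimately show ?thesis
    by (simp add: laurent_sum_def)
qed


lemma holomorphic_on_laurent_sum:
  fixes \<rho> R :: real
  assumes "0 < \<rho>"
    and rad_p: "fps_conv_radius (regular_part e) \<ge> R"
    and rad_q: "fps_conv_radius (principal_part e) \<ge> inverse \<rho>"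
  shows "laurent_sum e holomorphic_on {t. \<rho> < norm t \<and> norm t < R}"
proof -
  have "eval_fps (regular_part e) holomorphic_on {t. \<rho> < norm t \<and> norm t < R}"
    using rad_p by (intro holomorphic_on_eval_fps) (auto intro: ereal_less_le_trans)
  moreover have "(\<lambda>t. eval_fps (principal_part e) (inverse t)) holomorphic_on {t. \<rho> < norm t \<and> norm t < R}"
    by (rule holomorphic_on_subset[OF holomorphic_on_eval_fps_inverse[OF assms(1) rad_q]]) auto
  ultimately show ?thesis
    unfolding laurent_sum_def[abs_def] by (rule holomorphic_on_add)
qed

lemma fps_eq_0_if_eval_eq_0_on_ball:
  fixes p :: "complex fps" and r :: real
  assumes "0 < r" "fps_conv_radius p \<ge> r" "\<And>t. norm t < r \<Longrightarrow> eval_fps p t = 0"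
  shows "p = 0"
proof (rule eval_fps_eqD)
  have "ereal 0 < fps_conv_radius p"
    by (rule ereal_less_le_trans[OF assms(1,2)])
  then show "fps_conv_radius p > 0"
    by (simp add: zero_ereal_def)
  have "\<forall>\<^sub>F t in nhds 0. t \<in> ball 0 r"
    using assms(1) by (intro eventually_nhds_in_open) auto
  then show "\<forall>\<^sub>F t in nhds 0. eval_fps p t = eval_fps 0 t"
    by eventually_elim (simp add: assms(3))
qed simp

lemma fps_eq_0_if_eval_cancels_on_annulus:
  fixes p q :: "complex fps" and \<rho> R :: real
  assumes \<rho>R: "0 < \<rho>" "\<rho> < R"
    and rad_p: "fps_conv_radius p \<ge> R" and rad_q: "fps_conv_radius q \<ge> inverse \<rho>"
    and q0: "fps_nth q 0 = 0"
    and cancel: "\<And>t. \<rho> < norm t \<Longrightarrow> norm t < R \<Longrightarrow> eval_fps p t + eval_fps q (inverse t) = 0"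
  shows "p = 0" "q = 0"
proof -
  \<comment> \<open>Glued along the annulus, the two parts form an entire function vanishing at infinity.\<close>
  define E where "E t = (if norm t < R then eval_fps p t else - eval_fps q (inverse t))" for t
  have "E holomorphic_on ball 0 R \<union> {t::complex. \<rho> < norm t}"
  proof (rule holomorphic_on_Un)
    have "eval_fps p holomorphic_on ball 0 R"
      using rad_p by (intro holomorphic_on_eval_fps) (auto intro: ereal_less_le_trans)
    then show "E holomorphic_on ball 0 R"
      by (rule holomorphic_transform) (simp add: E_def)
    have "(\<lambda>t. - eval_fps q (inverse t)) holomorphic_on {t::complex. \<rho> < norm t}"
      using holomorphic_on_eval_fps_inverse[OF \<rho>R(1) rad_q] by (rule holomorphic_on_minus)
    then show "E holomorphic_on {t::complex. \<rho> < norm t}"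
      by (rule holomorphic_transform) (auto simp: E_def add_eq_0_iff dest: cancel)
  qed (auto intro: open_Collect_less continuous_intros)
  moreover have "ball 0 R \<union> {t::complex. \<rho> < norm t} = UNIV"
    using \<rho>R by auto
  moreover have "(E \<longlongrightarrow> 0) at_infinity"
  proof (rule Lim_transform_eventually)
    have "ereal (norm 0) < fps_conv_radius q"
      by (rule ereal_less_le_trans[OF _ rad_q]) (use \<rho>R in simp)
    then have "isCont (eval_fps q) 0"
      by (rule continuous_eval_fps)
    then show "((\<lambda>t. - eval_fps q (inverse t)) \<longlongrightarrow> 0) at_infinity"
      using isCont_tendsto_compose[OF _ tendsto_inverse_0, of "eval_fps q"] q0
      by (auto simp: eval_fps_at_0 intro: tendsto_minus_cancel)
    show "\<forall>\<^sub>F t in at_infinity. - eval_fps q (inverse t) = E t"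
      unfolding eventually_at_infinity by (auto simp: E_def intro!: exI[of _ R])
  qed
  ultimately have E0: "E t = 0" for t
    by (metis Liouville_weak_0)
  have "eval_fps p t = 0" if "norm t < R" for t
    using E0[of t] that by (simp add: E_def)
  then show "p = 0"
    using \<rho>R rad_p by (intro fps_eq_0_if_eval_eq_0_on_ball[of R]) auto
  have "ereal (inverse R) \<le> ereal (inverse \<rho>)"
    using \<rho>R by (simp add: le_imp_inverse_le)
  then have rad_q': "fps_conv_radius q \<ge> inverse R"
    using rad_q by (metis ereal_inverse order_trans)
  have "eval_fps q u = 0" if "norm u < inverse R" for u
  proof (cases "u = 0")
    case False
    with that have "R < norm (inverse u)"
      using \<rho>R by (simp add: norm_inverse inverse_less_imp_less)
    then show ?thesis
      using E0[of "inverse u"] by (simp add: E_def)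
  qed (simp add: eval_fps_at_0 q0)
  then show "q = 0"
    using \<rho>R rad_q' by (intro fps_eq_0_if_eval_eq_0_on_ball[of "inverse R"]) auto
qed

lemma laurent_coeff_eq_0_if_laurent_sum_eq_0:
  fixes \<rho> R :: real
  assumes \<rho>R: "0 < \<rho>" "\<rho> < R"
    and rad_p: "fps_conv_radius (regular_part e) \<ge> R"
    and rad_q: "fps_conv_radius (principal_part e) \<ge> inverse \<rho>"
    and zero: "\<And>t. \<rho> < norm t \<Longrightarrow> norm t < R \<Longrightarrow> laurent_sum e t = 0"
  shows "e k = 0"
proof (rule laurent_coeff_eq_0_if_parts_eq_0)
  show "regular_part e = 0" "principal_part e = 0"
    using fps_eq_0_if_eval_cancels_on_annulus[OF \<rho>R rad_p rad_q _ zero[unfolded laurent_sum_def]]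
    by (simp_all add: principal_part_def)
qed

lemma laurent_coeff_eq_0_if_sum_0_on_open_in_annulus:
  fixes e :: "int \<Rightarrow> complex" and \<rho> R :: real
  assumes \<rho>R: "0 < \<rho>" "\<rho> < R"
    and circles: "(\<lambda>k. norm (e k) * \<rho> powi k) summable_on UNIV" "(\<lambda>k. norm (e k) * R powi k) summable_on UNIV"
    and V: "open V" "V \<noteq> {}" "V \<subseteq> {t. \<rho> < norm t \<and> norm t < R}"
    and sum0: "\<And>t. t \<in> V \<Longrightarrow> ((\<lambda>k. e k * t powi k) has_sum 0) UNIV"
  shows "e k = 0"
proof -
  define A where "A = {t::complex. \<rho> < norm t \<and> norm t < R}"
  have rad_p: "fps_conv_radius (regular_part e) \<ge> R"
    using circles(2) \<rho>R by (intro conv_radius_regular_part_ge) auto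
  have rad_q: "fps_conv_radius (principal_part e) \<ge> inverse \<rho>"
    using circles(1) \<rho>R by (intro conv_radius_principal_part_ge) auto
  have "laurent_sum e holomorphic_on A"
    unfolding A_def by (rule holomorphic_on_laurent_sum[OF \<rho>R(1) rad_p rad_q])
  moreover have "open A"
    unfolding A_def by (intro open_Collect_conj) (auto intro!: open_Collect_less continuous_intros)
  moreover have "connected A"
    using connected_annulus(1)[where a = "0::complex"] by (simp add: A_def)
  moreover have "laurent_sum e t = 0" if "t \<in> V" for t
    using has_sum_unique[OF laurent_has_sum_laurent_sum[OF \<rho>R(1) _ _ rad_p rad_q] sum0] that V(3) by auto
  ultimately have "laurent_sum e t = 0" if "t \<in> A" for t
    using analytic_continuation_open[where g = "\<lambda>_. 0", of V A "laurent_sum e" t] that V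
    by (auto simp: A_def)
  then show ?thesis
    using laurent_coeff_eq_0_if_laurent_sum_eq_0[OF \<rho>R rad_p rad_q] by (auto simp: A_def)
qed

lemma radial_rescale:
  fixes t0 :: complex
  assumes "t0 \<noteq> 0" "r \<ge> 0"
  shows "norm (of_real (r / norm t0) * t0) = r"
    and "dist t0 (of_real (r / norm t0) * t0) = \<bar>r - norm t0\<bar>"
proof -
  show "norm (of_real (r / norm t0) * t0) = r"
    unfolding norm_mult norm_of_real using assms by simp
  have "t0 - of_real (r / norm t0) * t0 = of_real (1 - r / norm t0) * t0"
    by (simp add: algebra_simps)
  then have "dist t0 (of_real (r / norm t0) * t0) = \<bar>1 - r / norm t0\<bar> * norm t0"
    by (simp only: dist_norm norm_mult norm_of_real real_norm_def)
  also have "\<dots> = \<bar>(1 - r / norm t0) * norm t0\<bar>"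
    by (simp add: abs_mult)
  also have "(1 - r / norm t0) * norm t0 = norm t0 - r"
    using assms(1) by (simp add: field_simps)
  finally show "dist t0 (of_real (r / norm t0) * t0) = \<bar>r - norm t0\<bar>"
    by simp
qed

lemma open_ex_nonzero:
  fixes U :: "complex set"
  assumes "open U" "x \<in> U"
  shows "\<exists>t\<in>U. t \<noteq> 0"
proof (rule ccontr)
  assume "\<not> (\<exists>t\<in>U. t \<noteq> 0)"
  then have "U = {0}"
    using assms(2) by auto
  with assms(1) show False
    using not_open_singleton[of "0::complex"] by simp
qed

lemma laurent_coeff_eq_0_if_sum_0_on_open:
  fixes e :: "int \<Rightarrow> complex"
  assumes U: "open U" "U \<noteq> {}" "0 \<notin> U"
    and sum0: "\<And>t. t \<in> U \<Longrightarrow> ((\<lambda>k. e k * t powi k) has_sum 0) UNIV"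
  shows "e k = 0"
proof -
  obtain t0 where t0: "t0 \<in> U"
    using U by auto
  then have t0_nz: "t0 \<noteq> 0"
    using U by auto
  obtain \<epsilon> where \<epsilon>: "0 < \<epsilon>" "\<epsilon> < norm t0" "ball t0 (2 * \<epsilon>) \<subseteq> U"
  proof -
    obtain \<delta> where "\<delta> > 0" "ball t0 \<delta> \<subseteq> U"
      using open_contains_ball U t0 by blast
    moreover have "ball t0 (2 * min (\<delta> / 2) (norm t0 / 2)) \<subseteq> ball t0 \<delta>"
      by (intro subset_ball) simp
    ultimately show ?thesis
      by (intro that[of "min (\<delta> / 2) (norm t0 / 2)"]) (use t0_nz in \<open>auto simp: min_less_iff_disj\<close>)
  qed
  \<comment> \<open>Every circle whose radius is within \<epsilon> of norm t0 meets U.\<close>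
  have circle: "(\<lambda>k. norm (e k) * r powi k) summable_on UNIV" if "\<bar>r - norm t0\<bar> \<le> \<epsilon>" for r
  proof -
    define t where "t = of_real (r / norm t0) * t0"
    have "r \<ge> 0"
      using that \<epsilon> by auto
    have "dist t0 t < 2 * \<epsilon>"
      unfolding t_def radial_rescale(2)[OF t0_nz \<open>r \<ge> 0\<close>] using that \<epsilon> by auto
    then have "(\<lambda>k. e k * t powi k) summable_on UNIV"
      using sum0 \<epsilon>(3) has_sum_imp_summable by fastforce
    then have "(\<lambda>k. norm (e k * t powi k)) summable_on UNIV"
      by (simp add: summable_on_iff_abs_summable_on_complex)
    moreover have "norm t = r"
      unfolding t_def by (rule radial_rescale(1)[OF t0_nz \<open>r \<ge> 0\<close>])
    ultimately show ?thesis
      by (simp add: norm_mult norm_power_int)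
  qed
  have "ball t0 \<epsilon> \<subseteq> {t. norm t0 - \<epsilon> < norm t \<and> norm t < norm t0 + \<epsilon>}"
  proof
    fix t assume "t \<in> ball t0 \<epsilon>"
    then have "\<bar>norm t - norm t0\<bar> < \<epsilon>"
      using norm_triangle_ineq3[of t t0] by (simp add: dist_norm norm_minus_commute)
    then show "t \<in> {t. norm t0 - \<epsilon> < norm t \<and> norm t < norm t0 + \<epsilon>}"
      by auto
  qed
  moreover have "ball t0 \<epsilon> \<subseteq> U"
    using \<epsilon> by auto
  ultimately show ?thesis
    using \<epsilon> circle sum0
    by (intro laurent_coeff_eq_0_if_sum_0_on_open_in_annulus[where V = "ball t0 \<epsilon>"]) auto
qed

section \<open>Laurent series in several variables\<close>

lemma has_sum_diff:
  fixes f g :: "'a \<Rightarrow> 'b::topological_ab_group_add"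
  assumes "(f has_sum a) A" "(g has_sum b) A"
  shows "((\<lambda>x. f x - g x) has_sum (a - b)) A"
  using has_sum_add[OF assms(1), of "\<lambda>x. - g x" "- b"] assms(2) by (simp add: has_sum_uminus)

lemma laurent_abs_conv_to_iff_has_sum:
  "laurent_abs_conv_to n c z v \<longleftrightarrow> ((\<lambda>k. c k * lmono n z k) has_sum v) (lexps n)"
  unfolding laurent_abs_conv_to_def
  by (metis has_sum_imp_summable summable_on_iff_abs_summable_on_complex)

lemma laurent_abs_conv_iff_summable:
  "laurent_abs_conv n c z \<longleftrightarrow> (\<lambda>k. c k * lmono n z k) summable_on lexps n"
  unfolding laurent_abs_conv_def by (simp add: summable_on_iff_abs_summable_on_complex)

lemma lmono_fun_upd_last: "lmono (Suc d) w (k(d := l)) = lmono d (w(d := 0)) k * w d powi l"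
proof -
  have "lmono (Suc d) w (k(d := l)) = (\<Prod>i<d. w i powi k i) * w d powi l"
    unfolding lmono_def by (simp add: prod.lessThan_Suc)
  also have "(\<Prod>i<d. w i powi k i) = lmono d (w(d := 0)) k"
    unfolding lmono_def by (rule prod.cong) auto
  finally show ?thesis .
qed

lemma fun_upd_0_in_lexps: "k \<in> lexps (Suc d) \<Longrightarrow> k(d := 0) \<in> lexps d"
  by (auto simp: lexps_def)

lemma cspace_fun_upd_0: "\<rho> \<in> cspace d \<Longrightarrow> \<rho>(d := 0) = \<rho>"
  by (auto simp: cspace_def)

lemma laurent_has_sum_split_last:
  fixes c :: "(nat \<Rightarrow> int) \<Rightarrow> complex"
  assumes nz: "w d \<noteq> 0"
    and sum: "((\<lambda>k. c k * lmono (Suc d) w k) has_sum v) (lexps (Suc d))"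
  shows "(\<lambda>k. c (k(d := l)) * lmono d (w(d := 0)) k) summable_on lexps d"
    and "((\<lambda>l. inner_sum (Suc d) c l (w(d := 0)) * w d powi l) has_sum v) UNIV"
proof -
  define F where "F = (\<lambda>(l, k). c (k(d := l)) * lmono (Suc d) w (k(d := l)))"
  have F_sum: "(F has_sum v) (UNIV \<times> lexps d)"
    using sum
    by (subst (asm) has_sum_reindex_bij_witness[where i = "\<lambda>(l, k). k(d := l)"
          and j = "\<lambda>k. (k d, k(d := 0))" and T = "UNIV \<times> lexps d" and h = F])
      (auto simp: F_def lexps_def)
  have row: "F (l, k) = c (k(d := l)) * lmono d (w(d := 0)) k * w d powi l" for l k
    by (simp add: F_def lmono_fun_upd_last)
  have "(\<lambda>k. F (l, k)) summable_on lexps d" for l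
    using summable_on_SigmaD1[where f = "\<lambda>l k. F (l, k)"] has_sum_imp_summable[OF F_sum] by auto
  then have "(\<lambda>k. c (k(d := l)) * lmono d (w(d := 0)) k * w d powi l) summable_on lexps d" for l
    by (simp add: row)
  then show row_summable: "(\<lambda>k. c (k(d := l)) * lmono d (w(d := 0)) k) summable_on lexps d" for l
    by (subst (asm) summable_on_cmult_left') (use nz in auto)
  have "((\<lambda>k. F (l, k)) has_sum inner_sum (Suc d) c l (w(d := 0)) * w d powi l) (lexps d)" for l
    unfolding row inner_sum_def
    using has_sum_cmult_left[OF row_summable[THEN has_sum_infsum]] by simp
  then show "((\<lambda>l. inner_sum (Suc d) c l (w(d := 0)) * w d powi l) has_sum v) UNIV"
    by (intro has_sum_SigmaD[OF F_sum]) auto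
qed

lemma continuous_on_fun_upd:
  fixes g :: "'a::topological_space \<Rightarrow> nat \<Rightarrow> complex"
  assumes "continuous_on S g" "continuous_on S h"
  shows "continuous_on S (\<lambda>x. (g x)(d := h x))"
proof (rule continuous_on_coordinatewise_then_product)
  fix i
  show "continuous_on S (\<lambda>x. ((g x)(d := h x)) i)"
    using assms continuous_on_product_then_coordinatewise[OF assms(1), of i]
    by (cases "i = d") auto
qed

lemma open_slice:
  assumes V: "openin (top_of_set (cspace (Suc d))) V" and \<rho>: "\<rho> \<in> cspace (Suc d)"
  shows "open {t. \<rho>(d := t) \<in> V}"
proof -
  have "continuous_on UNIV (\<lambda>t::complex. \<rho>(d := t))"
    by (rule continuous_on_fun_upd) (auto intro: continuous_intros)
  moreover have "(\<lambda>t::complex. \<rho>(d := t)) \<in> UNIV \<rightarrow> cspace (Suc d)"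
    using \<rho> by (auto simp: cspace_def)
  ultimately have "openin (top_of_set UNIV) (UNIV \<inter> (\<lambda>t::complex. \<rho>(d := t)) -` V)"
    by (rule continuous_openin_preimage[OF _ _ V])
  then show ?thesis
    by (simp add: vimage_def)
qed

definition proj_punctured :: "nat \<Rightarrow> (nat \<Rightarrow> complex) set \<Rightarrow> (nat \<Rightarrow> complex) set" where
  "proj_punctured d V = {\<rho> \<in> cspace d. \<exists>t. t \<noteq> 0 \<and> \<rho>(d := t) \<in> V}"

lemma openin_proj_punctured:
  assumes V: "openin (top_of_set (cspace (Suc d))) V"
  shows "openin (top_of_set (cspace d)) (proj_punctured d V)"
proof (subst openin_subopen, intro ballI)
  fix \<rho> assume "\<rho> \<in> proj_punctured d V"
  then obtain t where t: "\<rho> \<in> cspace d" "t \<noteq> 0" "\<rho>(d := t) \<in> V"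
    by (auto simp: proj_punctured_def)
  have "continuous_on (cspace d) (\<lambda>\<sigma>::nat \<Rightarrow> complex. \<sigma>(d := t))"
    by (rule continuous_on_fun_upd) (auto intro: continuous_intros)
  moreover have "(\<lambda>\<sigma>::nat \<Rightarrow> complex. \<sigma>(d := t)) \<in> cspace d \<rightarrow> cspace (Suc d)"
    by (auto simp: cspace_def)
  ultimately have "openin (top_of_set (cspace d)) (cspace d \<inter> (\<lambda>\<sigma>. \<sigma>(d := t)) -` V)"
    by (rule continuous_openin_preimage[OF _ _ V])
  moreover have "cspace d \<inter> (\<lambda>\<sigma>. \<sigma>(d := t)) -` V \<subseteq> proj_punctured d V"
    using t by (auto simp: proj_punctured_def)
  ultimately show "\<exists>W. openin (top_of_set (cspace d)) W \<and> \<rho> \<in> W \<and> W \<subseteq> proj_punctured d V"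
    using t by blast
qed

lemma proj_punctured_nonempty:
  assumes V: "openin (top_of_set (cspace (Suc d))) V" "V \<noteq> {}"
  shows "proj_punctured d V \<noteq> {}"
proof -
  obtain w where w: "w \<in> V"
    using V by auto
  then have w_space: "w \<in> cspace (Suc d)"
    using openin_subset[OF V(1)] by auto
  have "open {t. w(d := t) \<in> V}"
    by (rule open_slice[OF V(1) w_space])
  moreover have "w d \<in> {t. w(d := t) \<in> V}"
    using w by simp
  ultimately have "\<exists>t\<in>{t. w(d := t) \<in> V}. t \<noteq> 0"
    by (rule open_ex_nonzero)
  then obtain t where "t \<noteq> 0" "w(d := t) \<in> V"
    by auto
  moreover have "w(d := 0) \<in> cspace d"
    using w_space by (auto simp: cspace_def)
  ultimately have "w(d := 0) \<in> proj_punctured d V"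
    unfolding proj_punctured_def by auto
  then show ?thesis
    by auto
qed

lemma slice_has_sum_0_if_has_sum_0_on_openin:
  fixes c :: "(nat \<Rightarrow> int) \<Rightarrow> complex"
  assumes V: "openin (top_of_set (cspace (Suc d))) V"
    and sum0: "\<And>w. w \<in> V \<Longrightarrow> ((\<lambda>k. c k * lmono (Suc d) w k) has_sum 0) (lexps (Suc d))"
    and \<rho>: "\<rho> \<in> proj_punctured d V"
  shows "((\<lambda>k. c (k(d := l)) * lmono d \<rho> k) has_sum 0) (lexps d)"
proof -
  have \<rho>_space: "\<rho> \<in> cspace d"
    using \<rho> by (simp add: proj_punctured_def)
  define U where "U = {t. \<rho>(d := t) \<in> V} - {0}"
  have "\<rho> \<in> cspace (Suc d)"
    using \<rho>_space by (simp add: cspace_def)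
  then have "open U"
    unfolding U_def by (intro open_delete open_slice[OF V])
  \<comment> \<open>Over \<rho> the series is a Laurent series in the last variable whose coefficients are
      the inner sums; it vanishes on U, so they do.\<close>
  have split: "(\<lambda>k. c (k(d := l)) * lmono d \<rho> k) summable_on lexps d"
    "((\<lambda>l. inner_sum (Suc d) c l \<rho> * t powi l) has_sum 0) UNIV" if "t \<in> U" for t l
    using laurent_has_sum_split_last[of "\<rho>(d := t)" d c 0] sum0 that
    by (auto simp: U_def cspace_fun_upd_0[OF \<rho>_space])
  have "U \<noteq> {}"
    using \<rho> by (auto simp: U_def proj_punctured_def)
  then obtain t where "t \<in> U"
    by auto
  then have "((\<lambda>k. c (k(d := l)) * lmono d \<rho> k) has_sum inner_sum (Suc d) c l \<rho>) (lexps d)"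
    using split(1) by (simp add: inner_sum_def has_sum_infsum)
  moreover have "inner_sum (Suc d) c l \<rho> = 0"
    by (rule laurent_coeff_eq_0_if_sum_0_on_open[OF \<open>open U\<close> \<open>U \<noteq> {}\<close>])
      (use split(2) in \<open>auto simp: U_def\<close>)
  ultimately show ?thesis
    by simp
qed

lemma laurent_coeff_eq_0_if_sum_0_on_openin:
  fixes c :: "(nat \<Rightarrow> int) \<Rightarrow> complex"
  assumes "openin (top_of_set (cspace d)) V" "V \<noteq> {}"
    and "\<And>w. w \<in> V \<Longrightarrow> ((\<lambda>k. c k * lmono d w k) has_sum 0) (lexps d)"
    and "k \<in> lexps d"
  shows "c k = 0"
  using assms
proof (induction d arbitrary: c V k)
  case 0
  have lexps_0: "lexps 0 = {\<lambda>_. 0}"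
    by (auto simp: lexps_def)
  obtain w where "w \<in> V"
    using 0 by auto
  then have "((\<lambda>k. c k * lmono 0 w k) has_sum 0) {\<lambda>_. 0}"
    using 0 by (simp add: lexps_0)
  moreover have "((\<lambda>k. c k * lmono 0 w k) has_sum c (\<lambda>_. 0)) {\<lambda>_. 0}"
    by (rule has_sum_finiteI) (simp_all add: lmono_def)
  ultimately have "c (\<lambda>_. 0) = 0"
    using has_sum_unique by blast
  with 0 lexps_0 show ?case
    by simp
next
  case (Suc d c V k)
  have "c (k(d := l)) = 0" if "k \<in> lexps d" for k l
    using Suc.IH[OF openin_proj_punctured[OF Suc.prems(1)] proj_punctured_nonempty[OF Suc.prems(1,2)]
        slice_has_sum_0_if_has_sum_0_on_openin[OF Suc.prems(1,3)] that] .
  from this[OF fun_upd_0_in_lexps[OF Suc.prems(4)], of "k d"] show ?case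
    by simp
qed

section \<open>Upper-truncated series\<close>

lemma has_sum_descending_int:
  fixes g :: "int \<Rightarrow> 'a::topological_comm_monoid_add"
  assumes sum: "((\<lambda>j. g (N - int j)) has_sum s) UNIV" and zero: "\<And>m. m > N \<Longrightarrow> g m = 0"
  shows "(g has_sum s) UNIV"
proof -
  have "(g has_sum s) {..N}"
    using sum by (subst has_sum_reindex_bij_witness[where i = "\<lambda>j. N - int j"
          and j = "\<lambda>m. nat (N - m)" and T = UNIV and h = "\<lambda>j. g (N - int j)"]) auto
  then show ?thesis
    by (subst (asm) has_sum_cong_neutral[where T = UNIV]) (auto intro: zero)
qed

lemma descending_series_abs_summable:
  fixes g :: "int \<Rightarrow> complex"
  assumes conv: "summable (\<lambda>j. g (N - int j) * t0 powi (N - int j))"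
    and t0: "t0 \<noteq> 0" "norm t0 < norm t"
  shows "summable (\<lambda>j. norm (g (N - int j) * t powi (N - int j)))"
proof -
  obtain B where B: "\<And>j. norm (g (N - int j) * t0 powi (N - int j)) \<le> B"
    using summable_LIMSEQ_zero[OF conv, THEN convergentI, THEN convergent_imp_Bseq]
    by (auto simp: Bseq_def)
  define r where "r = norm t / norm t0"
  have r: "r > 1"
    using t0 by (simp add: r_def)
  have bound: "norm (g (N - int j) * t powi (N - int j)) \<le> B * r powi N * inverse r ^ j" for j
  proof -
    have "norm (g (N - int j) * t powi (N - int j))
            = norm (g (N - int j) * t0 powi (N - int j)) * r powi (N - int j)"
      using t0 by (simp add: r_def norm_mult norm_power_int power_int_divide_distrib)
    also have "\<dots> \<le> B * r powi (N - int j)"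
      using B[of j] r by (intro mult_right_mono) auto
    also have "r powi (N - int j) = r powi N * inverse r ^ j"
      using r by (simp add: power_int_diff power_inverse divide_inverse)
    finally show ?thesis
      by (simp add: mult.assoc)
  qed
  have "summable (\<lambda>j. B * r powi N * inverse r ^ j)"
    using r by (intro summable_mult summable_geometric) (simp add: inverse_less_1_iff)
  then show ?thesis
    by (rule summable_comparison_test'[where N = 0]) (use bound in auto)
qed

lemma truncated_laurent_coeff_unique:
  fixes g h :: "int \<Rightarrow> complex"
  assumes U: "open U" "U \<noteq> {}"
    and g_zero: "\<And>m. m > N \<Longrightarrow> g m = 0"
    and g_sum: "\<And>t. t \<in> U \<Longrightarrow> (\<lambda>j. g (N - int j) * t powi (N - int j)) sums F t"
    and h_sum: "\<And>t. t \<in> U \<Longrightarrow> t \<noteq> 0 \<Longrightarrow> ((\<lambda>m. h m * t powi m) has_sum F t) UNIV"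
  shows "g m = h m"
proof -
  obtain x where "x \<in> U"
    using U(2) by blast
  then obtain t0 where t0: "t0 \<in> U" "t0 \<noteq> 0"
    using open_ex_nonzero[OF U(1)] by blast
  obtain r where r: "r > 0" "ball t0 r \<subseteq> U"
    using open_contains_ball U(1) t0(1) by blast
  \<comment> \<open>Outside the circle through t0 the truncated series converges absolutely.\<close>
  define U' where "U' = U \<inter> {t. norm t0 < norm t}"
  have "open U'"
    unfolding U'_def by (intro open_Int U(1) open_Collect_less continuous_intros)
  moreover have "U' \<noteq> {}"
  proof -
    define t1 where "t1 = of_real ((norm t0 + r / 2) / norm t0) * t0"
    have "norm t1 = norm t0 + r / 2" "dist t0 t1 = r / 2"
      unfolding t1_def using radial_rescale[OF t0(2), of "norm t0 + r / 2"] r by auto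
    then have "t1 \<in> U'"
      using r by (auto simp: U'_def)
    then show ?thesis
      by auto
  qed
  moreover have "0 \<notin> U'"
    by (auto simp: U'_def)
  moreover have "((\<lambda>m. (g m - h m) * t powi m) has_sum 0) UNIV" if t: "t \<in> U'" for t
  proof -
    have t': "t \<in> U" "norm t0 < norm t" "t \<noteq> 0"
      using t by (auto simp: U'_def)
    have abs: "summable (\<lambda>j. norm (g (N - int j) * t powi (N - int j)))"
      using descending_series_abs_summable[OF sums_summable[OF g_sum[OF t0(1)]] t0(2) t'(2)] .
    have "((\<lambda>m. g m * t powi m) has_sum F t) UNIV"
      using norm_summable_imp_has_sum[OF abs g_sum[OF t'(1)]]
      by (rule has_sum_descending_int[where g = "\<lambda>m. g m * t powi m"]) (simp add: g_zero)
    from has_sum_diff[OF this h_sum[OF t'(1,3)]] show ?thesis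
      by (simp add: algebra_simps)
  qed
  ultimately have "g m - h m = 0"
    by (rule laurent_coeff_eq_0_if_sum_0_on_open)
  then show ?thesis
    by simp
qed

lemma laurent_abs_conv_to_cong:
  assumes "\<And>k. k \<in> lexps n \<Longrightarrow> a k = b k"
  shows "laurent_abs_conv_to n a z v \<longleftrightarrow> laurent_abs_conv_to n b z v"
  unfolding laurent_abs_conv_to_iff_has_sum by (rule has_sum_cong) (simp add: assms)

lemma proj_last_fun_upd: "\<rho> \<in> cspace d \<Longrightarrow> proj_last (Suc d) (\<rho>(d := t)) = \<rho>"
  by (simp add: proj_last_def cspace_fun_upd_0)

lemma proj_punctured_subset_proj_last: "proj_punctured d S \<subseteq> proj_last (Suc d) ` S"
proof
  fix \<rho> assume "\<rho> \<in> proj_punctured d S"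
  then obtain t where "\<rho> \<in> cspace d" "\<rho>(d := t) \<in> S"
    by (auto simp: proj_punctured_def)
  then show "\<rho> \<in> proj_last (Suc d) ` S"
    using proj_last_fun_upd by (metis image_eqI)
qed

lemma inner_sum_eq_if_truncated_sum:
  fixes a b :: "(nat \<Rightarrow> int) \<Rightarrow> complex" and f :: "(nat \<Rightarrow> complex) \<Rightarrow> complex"
  assumes S: "openin (top_of_set (cspace (Suc d))) S"
    and b: "\<And>z. z \<in> S \<Longrightarrow> laurent_abs_conv_to (Suc d) b z (f z)"
    and a_zero: "\<And>m w. m > N \<Longrightarrow> w \<in> proj_last (Suc d) ` S \<Longrightarrow> inner_sum (Suc d) a m w = 0"
    and a_sum: "\<And>z. z \<in> S \<Longrightarrow>
      (\<lambda>j. inner_sum (Suc d) a (N - int j) (proj_last (Suc d) z) * z d powi (N - int j)) sums f z"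
    and \<rho>: "\<rho> \<in> proj_punctured d S"
  shows "inner_sum (Suc d) a m \<rho> = inner_sum (Suc d) b m \<rho>"
proof (rule truncated_laurent_coeff_unique[where U = "{t. \<rho>(d := t) \<in> S}" and N = N])
  have \<rho>_space: "\<rho> \<in> cspace d"
    using \<rho> by (simp add: proj_punctured_def)
  then show "open {t. \<rho>(d := t) \<in> S}"
    by (intro open_slice[OF S]) (simp add: cspace_def)
  show "{t. \<rho>(d := t) \<in> S} \<noteq> {}"
    using \<rho> by (auto simp: proj_punctured_def)
  show "inner_sum (Suc d) a m' \<rho> = 0" if "m' > N" for m'
    using a_zero that \<rho> proj_punctured_subset_proj_last by blast
  show "(\<lambda>j. inner_sum (Suc d) a (N - int j) \<rho> * t powi (N - int j)) sums f (\<rho>(d := t))"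
    if "t \<in> {t. \<rho>(d := t) \<in> S}" for t
    using a_sum[of "\<rho>(d := t)"] that by (simp add: proj_last_fun_upd[OF \<rho>_space])
  show "((\<lambda>l. inner_sum (Suc d) b l \<rho> * t powi l) has_sum f (\<rho>(d := t))) UNIV"
    if "t \<in> {t. \<rho>(d := t) \<in> S}" "t \<noteq> 0" for t
    using laurent_has_sum_split_last(2)[of "\<rho>(d := t)" d b "f (\<rho>(d := t))"] b that
    by (simp add: laurent_abs_conv_to_iff_has_sum cspace_fun_upd_0[OF \<rho>_space])
qed

lemma laurent_coeff_eq_if_truncated_sum:
  fixes a b :: "(nat \<Rightarrow> int) \<Rightarrow> complex" and f :: "(nat \<Rightarrow> complex) \<Rightarrow> complex"
  assumes S: "openin (top_of_set (cspace (Suc d))) S" "S \<noteq> {}"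
    and b: "\<And>z. z \<in> S \<Longrightarrow> laurent_abs_conv_to (Suc d) b z (f z)"
    and a_inner: "\<And>m w. w \<in> proj_last (Suc d) ` S \<Longrightarrow> laurent_abs_conv d (\<lambda>k. a (k(d := m))) w"
    and a_zero: "\<And>m w. m > N \<Longrightarrow> w \<in> proj_last (Suc d) ` S \<Longrightarrow> inner_sum (Suc d) a m w = 0"
    and a_sum: "\<And>z. z \<in> S \<Longrightarrow>
      (\<lambda>j. inner_sum (Suc d) a (N - int j) (proj_last (Suc d) z) * z d powi (N - int j)) sums f z"
    and k: "k \<in> lexps (Suc d)"
  shows "a k = b k"
proof -
  have "a (k(d := m)) - b (k(d := m)) = 0" if "k \<in> lexps d" for k m
  proof (rule laurent_coeff_eq_0_if_sum_0_on_openin[OF openin_proj_punctured[OF S(1)]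
        proj_punctured_nonempty[OF S] _ that])
    fix \<rho> assume \<rho>: "\<rho> \<in> proj_punctured d S"
    then obtain t where t: "\<rho> \<in> cspace d" "t \<noteq> 0" "\<rho>(d := t) \<in> S"
      by (auto simp: proj_punctured_def)
    have "(\<lambda>k. a (k(d := m)) * lmono d \<rho> k) summable_on lexps d"
      using a_inner[of \<rho> m] \<rho> proj_punctured_subset_proj_last by (auto simp: laurent_abs_conv_iff_summable)
    then have a_has_sum: "((\<lambda>k. a (k(d := m)) * lmono d \<rho> k) has_sum inner_sum (Suc d) a m \<rho>) (lexps d)"
      by (simp add: inner_sum_def has_sum_infsum)
    have "(\<lambda>k. b (k(d := m)) * lmono d \<rho> k) summable_on lexps d"
      using laurent_has_sum_split_last(1)[of "\<rho>(d := t)" d b "f (\<rho>(d := t))"] b t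
      by (simp add: laurent_abs_conv_to_iff_has_sum cspace_fun_upd_0[OF t(1)])
    then have b_has_sum: "((\<lambda>k. b (k(d := m)) * lmono d \<rho> k) has_sum inner_sum (Suc d) b m \<rho>) (lexps d)"
      by (simp add: inner_sum_def has_sum_infsum)
    from has_sum_diff[OF a_has_sum b_has_sum]
    show "((\<lambda>k. (a (k(d := m)) - b (k(d := m))) * lmono d \<rho> k) has_sum 0) (lexps d)"
      by (simp add: inner_sum_eq_if_truncated_sum[OF S(1) b a_zero a_sum \<rho>] algebra_simps)
  qed
  from this[OF fun_upd_0_in_lexps[OF k], of "k d"] show ?thesis
    by simp
qed

theorem mainTheorem4:
  fixes n :: nat
    and f :: "(nat \<Rightarrow> complex) \<Rightarrow> complex"
    and T S :: "(nat \<Rightarrow> complex) set"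
    and a :: "(nat \<Rightarrow> int) \<Rightarrow> complex"
  assumes n: "n \<ge> 1"
    and T_dom: "multicircular_domain n T" and T_conn: "connected T"
    and holo: "holo_on_C n f T"
    and rat: "\<exists>P Q. is_mpoly n P \<and> is_mpoly n Q \<and> (\<exists>\<alpha>. Q \<alpha> \<noteq> 0) \<and>
               (\<forall>z\<in>T. mpoly_eval n Q z \<noteq> 0 \<longrightarrow> f z = mpoly_eval n P z / mpoly_eval n Q z) \<and>
               (\<exists>b. laurent_expansion_on n b f T \<and>
                  (\<exists>k\<in>lexps n. b k \<noteq> 0 \<and>
                      k (n - 1) = int (deg_last n P) - int (deg_last n Q)) \<and>
                  (\<forall>k\<in>lexps n. b k \<noteq> 0 \<longrightarrow>
                      k (n - 1) \<le> int (deg_last n P) - int (deg_last n Q)))"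
    and S_open: "open_in_C n S" and S_sub: "S \<subseteq> T" and S_ne: "S \<noteq> {}"
    and inner_conv: "\<forall>m::int. \<forall>w\<in>proj_last n ` S.
               laurent_abs_conv (n - 1) (\<lambda>k'. a (k'(n - 1 := m))) w"
    and trunc: "\<exists>N::int. (\<forall>m>N. \<forall>w\<in>proj_last n ` S. inner_sum n a m w = 0) \<and>
               (\<forall>z\<in>S. (\<lambda>j::nat. inner_sum n a (N - int j) (proj_last n z) * z (n - 1) powi (N - int j))
                          sums f z)"
  shows "\<forall>z\<in>T. laurent_abs_conv_to n a z (f z)"
proof -
  obtain d where n_Suc: "n = Suc d"
    using n by (cases n) auto
  obtain b where b: "laurent_expansion_on n b f T"
    using rat by blast
  obtain N where a_zero: "\<And>m w. m > N \<Longrightarrow> w \<in> proj_last n ` S \<Longrightarrow> inner_sum n a m w = 0"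
    and a_sum: "\<And>z. z \<in> S \<Longrightarrow>
      (\<lambda>j. inner_sum n a (N - int j) (proj_last n z) * z (n - 1) powi (N - int j)) sums f z"
    using trunc by blast
  have a_eq_b: "a k = b k" if "k \<in> lexps n" for k
  proof (rule laurent_coeff_eq_if_truncated_sum[where S = S and f = f and N = N])
    show "openin (top_of_set (cspace (Suc d))) S" "S \<noteq> {}"
      using S_open S_ne by (simp_all add: open_in_C_def n_Suc)
    show "laurent_abs_conv_to (Suc d) b z (f z)" if "z \<in> S" for z
      using b S_sub that unfolding laurent_expansion_on_def n_Suc by blast
    show "laurent_abs_conv d (\<lambda>k. a (k(d := m))) w" if "w \<in> proj_last (Suc d) ` S" for m w
      using bspec[OF spec[OF inner_conv[unfolded n_Suc diff_Suc_1], of m] that] .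
    show "inner_sum (Suc d) a m w = 0" if "m > N" "w \<in> proj_last (Suc d) ` S" for m w
      using a_zero that by (simp add: n_Suc)
    show "(\<lambda>j. inner_sum (Suc d) a (N - int j) (proj_last (Suc d) z) * z d powi (N - int j)) sums f z"
      if "z \<in> S" for z
      using a_sum[OF that] by (simp add: n_Suc)
    show "k \<in> lexps (Suc d)"
      using that by (simp add: n_Suc)
  qed
  show ?thesis
  proof
    fix z assume "z \<in> T"
    then have "laurent_abs_conv_to n b z (f z)"
      using b by (simp add: laurent_expansion_on_def)
    then show "laurent_abs_conv_to n a z (f z)"
      using laurent_abs_conv_to_cong[of n a b, OF a_eq_b] by blast
  qed
qed

end
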